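(* Suppose that $K$ is algebraically closed of characteristic $0$ and its residue class field $k$ has characteristic $p>0$. Then for each $m\in\mathbb{N}$ there exist $x_1,\dots,x_m\in K^\vee$ such that $\{\pi(x_1),\dots,\pi(x_m)\}$ is an orthogonal subset of $K^\vee/K$, where $\pi:K^\vee\to K^\vee/K$ is the canonical quotient map.
   Context: $K$ is a complete non-archimedean non-trivially valued field which is not spherically complete; $K^\vee$ is a fixed spherically complete valued field which is an immediate extension of $K$, regarded as a $K$-normed space with its absolute value. $K^\vee/K$ carries the quotient norm $\|\pi(z)\|=\inf_{a\in K}|z-a|$. A subset $S$ not containing $0$ is orthogonal if $\|\sum_i\lambda_is_i\|=\max_i\|\lambda_is_i\|$ for all finitely many distinct $s_i\in S$ and $\lambda_i\in K$. *)

theory Defs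
  imports Complex_Main "HOL-Computational_Algebra.Polynomial"
begin

text \<open>The spherically complete field K^v is modelled as a type 'L (class field) with an
absolute value v; the field K is a subset of 'L which is a subfield.  The absolute
value of K is the restriction of v.\<close>

definition nonarch_abs :: "('L::field \<Rightarrow> real) \<Rightarrow> bool" where
  "nonarch_abs v \<longleftrightarrow>
     (\<forall>x. v x \<ge> 0) \<and> (\<forall>x. v x = 0 \<longleftrightarrow> x = 0) \<and>
     (\<forall>x y. v (x * y) = v x * v y) \<and> (\<forall>x y. v (x + y) \<le> max (v x) (v y))"

definition is_subfield :: "'L::field set \<Rightarrow> bool" where
  "is_subfield K \<longleftrightarrow> 0 \<in> K \<and> 1 \<in> K \<and>
     (\<forall>x\<in>K. \<forall>y\<in>K. x + y \<in> K \<and> x * y \<in> K) \<and>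
     (\<forall>x\<in>K. - x \<in> K \<and> inverse x \<in> K)"

definition v_complete :: "'L::field set \<Rightarrow> ('L \<Rightarrow> real) \<Rightarrow> bool" where
  "v_complete K v \<longleftrightarrow>
     (\<forall>f::nat \<Rightarrow> 'L. (\<forall>n. f n \<in> K) \<and>
        (\<forall>e>0. \<exists>N. \<forall>m\<ge>N. \<forall>n\<ge>N. v (f m - f n) < e)
        \<longrightarrow> (\<exists>a\<in>K. (\<lambda>n. v (f n - a)) \<longlonglongrightarrow> 0))"

definition nontrivially_valued :: "'L::field set \<Rightarrow> ('L \<Rightarrow> real) \<Rightarrow> bool" where
  "nontrivially_valued K v \<longleftrightarrow> (\<exists>a\<in>K. a \<noteq> 0 \<and> v a \<noteq> 1)"

definition vball :: "'L::field set \<Rightarrow> ('L \<Rightarrow> real) \<Rightarrow> 'L \<Rightarrow> real \<Rightarrow> 'L set" where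
  "vball S v c r = {x \<in> S. v (x - c) \<le> r}"

definition spherically_complete :: "'L::field set \<Rightarrow> ('L \<Rightarrow> real) \<Rightarrow> bool" where
  "spherically_complete S v \<longleftrightarrow>
     (\<forall>B :: ('L \<times> real) set.
        B \<noteq> {} \<and> (\<forall>(c, r)\<in>B. c \<in> S \<and> r \<ge> 0) \<and>
        (\<forall>(c, r)\<in>B. \<forall>(d, s)\<in>B. vball S v c r \<subseteq> vball S v d s \<or> vball S v d s \<subseteq> vball S v c r)
        \<longrightarrow> (\<exists>x\<in>S. \<forall>(c, r)\<in>B. x \<in> vball S v c r))"

text \<open>'L (with v) is an immediate extension of K: same value group and same residue field.\<close>
definition immediate_ext :: "'L::field set \<Rightarrow> ('L \<Rightarrow> real) \<Rightarrow> bool" where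
  "immediate_ext K v \<longleftrightarrow>
     v ` (UNIV - {0}) = v ` (K - {0}) \<and>
     (\<forall>x. v x \<le> 1 \<longrightarrow> (\<exists>a\<in>K. v a \<le> 1 \<and> v (x - a) < 1))"

definition alg_closed_sub :: "'L::field set \<Rightarrow> bool" where
  "alg_closed_sub K \<longleftrightarrow>
     (\<forall>p :: 'L poly. degree p > 0 \<and> (\<forall>i. coeff p i \<in> K) \<longrightarrow> (\<exists>x\<in>K. poly p x = 0))"

text \<open>Quotient norm on L/K, evaluated at a representative z of the coset \<pi>(z).\<close>
definition qnorm :: "'L::field set \<Rightarrow> ('L \<Rightarrow> real) \<Rightarrow> 'L \<Rightarrow> real" where
  "qnorm K v z = Inf ((\<lambda>a. v (z - a)) ` K)"

text \<open>A set S of representatives (one per coset) whose cosets \<pi>(S) form an orthogonal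
subset of L/K: no coset is 0, distinct elements lie in distinct cosets, and
the quotient norm of every K-linear combination of finitely many distinct elements
is the maximum of the quotient norms of the terms (note \<pi>(\<lambda> s) = \<lambda> \<pi>(s)).\<close>
definition orthogonal_mod :: "'L::field set \<Rightarrow> ('L \<Rightarrow> real) \<Rightarrow> 'L set \<Rightarrow> bool" where
  "orthogonal_mod K v S \<longleftrightarrow>
     (\<forall>s\<in>S. s \<notin> K) \<and> (\<forall>s\<in>S. \<forall>t\<in>S. s \<noteq> t \<longrightarrow> s - t \<notin> K) \<and>
     (\<forall>F lam. finite F \<and> F \<subseteq> S \<and> F \<noteq> {} \<and> (\<forall>s\<in>F. lam s \<in> K) \<longrightarrow>
        qnorm K v (\<Sum>s\<in>F. lam s * s) = Max ((\<lambda>s. qnorm K v (lam s * s)) ` F))"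

end

theory Submission
  imports Defs
begin

text \<open>Since \<open>K\<close> is not spherically complete but \<open>K\<^sup>\<or>\<close> is, there is
  \<open>z \<notin> K\<close>. Completeness of \<open>K\<close> makes \<open>r = dist(z, K)\<close> positive, and
  immediacy of the extension means this distance is not attained. Fix \<open>t > 1\<close>
  with \<open>|p| t^(p^m) < 1\<close> and translate \<open>z\<close> so that \<open>|z| < r t\<close>.
  Then the powers \<open>z^(p^i)\<close>, \<open>i < m\<close>, are orthogonal modulo \<open>K\<close>.
  Upper bound: for \<open>a \<in> K\<close> close to \<open>z\<close>, all middle binomial coefficients of a
  \<open>p\<close>-power are divisible by \<open>p\<close>, so \<open>|z^(p^i) - a^(p^i)| \<le> |z - a|^(p^i)\<close>
  and \<open>\<parallel>\<lambda> z^(p^i)\<parallel> \<le> |\<lambda>| r^(p^i)\<close>.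
  Lower bound: as \<open>K\<close> is algebraically closed, \<open>|q(z)|\<close> is the Gauss norm of
  \<open>q(X + a)\<close> at radius \<open>|z - a|\<close> for \<open>a\<close> close to \<open>z\<close>; for
  \<open>q = \<Sum> \<lambda>\<^sub>i X^(p^i) - b\<close> the coefficient of the dominant monomial
  \<open>X^(p^i)\<close> survives in \<open>q(X + a)\<close>, for the same divisibility reason, whence
  \<open>|q(z)| \<ge> max\<^sub>i |\<lambda>\<^sub>i| r^(p^i)\<close>.\<close>

lemma coeff_linear_power: "coeff ([:a, 1:] ^ n) k = of_nat (n choose k) * a ^ (n - k)"
  for a :: "'a::comm_ring_1"
  by (cases "k \<le> n") (simp_all add: coeff_linear_poly_power coeff_eq_0 degree_linear_power binomial_eq_0)

lemma pcompose_power_left: "pcompose (p ^ n) q = pcompose p q ^ n"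
  by (induction n) (simp_all add: pcompose_1 pcompose_mult)

lemma pcompose_monom: "pcompose (monom c n) q = smult c (q ^ n)"
  unfolding monom_altdef pcompose_smult pcompose_power_left by (simp add: pcompose_pCons)

lemma coeff_pcompose_sum_monom_linear:
  "coeff (pcompose (\<Sum>i\<in>I. monom (c i) (n i)) [:a, 1:]) k
     = (\<Sum>i\<in>I. c i * (of_nat (n i choose k) * a ^ (n i - k)))"
  for a :: "'a::comm_ring_1"
  by (simp add: pcompose_sum pcompose_monom coeff_sum coeff_linear_power)

lemma prime_dvd_choose_prime_power:
  assumes "prime (p::nat)" "0 < k" "k < p ^ i"
  shows "p dvd (p ^ i choose k)"
proof (rule ccontr)
  assume "\<not> p dvd (p ^ i choose k)"
  then have "coprime (p ^ i) (p ^ i choose k)"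
    using assms(1) by (simp add: prime_imp_coprime)
  moreover have "p ^ i dvd k * (p ^ i choose k)"
    using times_binomial_minus1_eq[OF assms(2), of "p ^ i"] by simp
  ultimately have "p ^ i dvd k"
    using coprime_dvd_mult_left_iff by blast
  then show False
    using assms(2,3) by (simp add: nat_dvd_not_less)
qed

lemma exists_gt_1_power_mult_less_1:
  fixes c :: real
  assumes "0 \<le> c" "c < 1" "0 < N"
  obtains t where "1 < t" "c * t ^ N < 1"
proof
  define t where "t = root N (2 / (1 + c))"
  show "1 < t"
    unfolding t_def using assms by simp
  have "c * t ^ N = 2 * c / (1 + c)"
    unfolding t_def using assms by simp
  also have "\<dots> < 1"
    using assms by (simp add: divide_less_eq)
  finally show "c * t ^ N < 1" .
qed

locale nonarch_field =
  fixes v :: "'L::field \<Rightarrow> real"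
  assumes nonarch: "nonarch_abs v"
begin

lemma v_nonneg [simp]: "0 \<le> v x"
  and v_eq_0_iff [simp]: "v x = 0 \<longleftrightarrow> x = 0"
  and v_mult [simp]: "v (x * y) = v x * v y"
  and v_add_le: "v (x + y) \<le> max (v x) (v y)"
  using nonarch unfolding nonarch_abs_def by auto

lemma v_0 [simp]: "v 0 = 0"
  by simp

lemma v_pos_iff [simp]: "0 < v x \<longleftrightarrow> x \<noteq> 0"
  using v_nonneg[of x] v_eq_0_iff[of x] by linarith

lemma v_1 [simp]: "v 1 = 1"
  using v_mult[of 1 1] v_eq_0_iff[of 1] by (metis mult_cancel_right1 one_neq_zero)

lemma v_minus [simp]: "v (- x) = v x"
proof -
  have "v (- 1) ^ 2 = 1"
    using v_mult[of "- 1" "- 1"] by (simp add: power2_eq_square)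
  then have "v (- 1) = 1"
    using v_nonneg[of "- 1"] by (simp add: power2_eq_1_iff)
  then show ?thesis
    using v_mult[of "- 1" x] by simp
qed

lemma v_diff_commute: "v (x - y) = v (y - x)"
  by (metis minus_diff_eq v_minus)

lemma v_diff_le: "v (x - y) \<le> max (v x) (v y)"
  using v_add_le[of x "- y"] by simp

lemma v_add_eq_right: "v x < v y \<Longrightarrow> v (x + y) = v y"
  using v_add_le[of x y] v_diff_le[of "x + y" x] by auto

lemma v_add_eq_left: "v y < v x \<Longrightarrow> v (x + y) = v x"
  using v_add_eq_right[of y x] by (simp add: add.commute)

lemma v_eq_if_v_diff_less: "v (z - a) < v z \<Longrightarrow> v a = v z"
  using v_add_eq_left[of "a - z" z] by (simp add: v_diff_commute)

lemma v_add_eq_if_le_contraction: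
  assumes "v y \<le> c * v x" "c < 1"
  shows "v (x + y) = v x"
proof (cases "x = 0")
  case True
  then show ?thesis
    using assms(1) v_nonneg[of y] by simp
next
  case False
  then have "c * v x < v x"
    using assms(2) by simp
  then show ?thesis
    using assms(1) v_add_eq_left[of y x] by linarith
qed

lemma v_power [simp]: "v (x ^ n) = v x ^ n"
  by (induction n) auto

lemma v_divide [simp]: "v (x / y) = v x / v y"
proof (cases "y = 0")
  case False
  then have "v (x / y) * v y = v x"
    by (metis v_mult nonzero_eq_divide_eq)
  then show ?thesis
    using False by (simp add: eq_divide_eq)
qed simp

lemma v_of_nat_le_1: "v (of_nat n) \<le> 1"
proof (induction n)
  case (Suc n)
  then show ?case
    using v_add_le[of 1 "of_nat n"] by simp
qed simp

lemma v_of_nat_le_of_dvd: "p dvd n \<Longrightarrow> v (of_nat n) \<le> v (of_nat p)"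
  using mult_left_le[OF v_of_nat_le_1 v_nonneg] by (auto elim: dvdE)

lemma v_sum_le:
  assumes "\<And>i. i \<in> A \<Longrightarrow> v (f i) \<le> c" "0 \<le> c"
  shows "v (sum f A) \<le> c"
  using assms
proof (induction A rule: infinite_finite_induct)
  case (insert x A)
  then have "v (f x) \<le> c" "v (sum f A) \<le> c"
    by simp_all
  then show ?case
    using v_add_le[of "f x" "sum f A"] insert.hyps by simp
qed simp_all

lemma v_Cauchy_if_approximates:
  assumes "\<And>n. v (z - f n) < inverse (real (Suc n))"
  shows "\<forall>e>0. \<exists>N. \<forall>m\<ge>N. \<forall>n\<ge>N. v (f m - f n) < e"
proof (intro allI impI)
  fix e :: real
  assume "0 < e"
  then obtain N where N: "inverse (real (Suc N)) < e"
    using reals_Archimedean by blast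
  have close: "v (z - f n) < e" if "N \<le> n" for n
  proof -
    have "inverse (real (Suc n)) \<le> inverse (real (Suc N))"
      using that by simp
    then show ?thesis
      using assms[of n] N by linarith
  qed
  have "v (f m - f n) < e" if "N \<le> m" "N \<le> n" for m n
    using v_diff_le[of "z - f n" "z - f m"] close[OF that(1)] close[OF that(2)] by simp
  then show "\<exists>N. \<forall>m\<ge>N. \<forall>n\<ge>N. v (f m - f n) < e"
    by blast
qed

definition gauss_norm :: "'L poly \<Rightarrow> real \<Rightarrow> real" where
  "gauss_norm h \<rho> = Max ((\<lambda>k. v (coeff h k) * \<rho> ^ k) ` {..degree h})"

lemma gauss_norm_attained: "\<exists>k\<le>degree h. gauss_norm h \<rho> = v (coeff h k) * \<rho> ^ k"
proof -
  have "gauss_norm h \<rho> \<in> (\<lambda>k. v (coeff h k) * \<rho> ^ k) ` {..degree h}"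
    unfolding gauss_norm_def by (intro Max_in) auto
  then show ?thesis
    by auto
qed

lemma gauss_norm_le: "(\<And>k. v (coeff h k) * \<rho> ^ k \<le> B) \<Longrightarrow> gauss_norm h \<rho> \<le> B"
  using gauss_norm_attained[of h \<rho>] by auto

lemma coeff_le_gauss_norm:
  assumes "0 \<le> \<rho>"
  shows "v (coeff h k) * \<rho> ^ k \<le> gauss_norm h \<rho>"
proof (cases "k \<le> degree h")
  case True
  then show ?thesis
    unfolding gauss_norm_def by (intro Max_ge) auto
next
  case False
  have "v (coeff h 0) * \<rho> ^ 0 \<le> gauss_norm h \<rho>"
    unfolding gauss_norm_def by (intro Max_ge) (auto intro!: image_eqI[of _ _ 0])
  then show ?thesis
    using False assms by (simp add: coeff_eq_0 order_trans[OF v_nonneg])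
qed

lemma gauss_norm_const [simp]: "gauss_norm [:c:] \<rho> = v c"
  unfolding gauss_norm_def by simp

lemma gauss_norm_0 [simp]: "gauss_norm 0 \<rho> = 0"
  unfolding gauss_norm_def by simp

lemma gauss_norm_pos:
  assumes "h \<noteq> 0" "0 < \<rho>"
  shows "0 < gauss_norm h \<rho>"
proof -
  have "0 < v (coeff h (degree h)) * \<rho> ^ degree h"
    using assms by simp
  also have "\<dots> \<le> gauss_norm h \<rho>"
    using assms(2) by (simp add: coeff_le_gauss_norm)
  finally show ?thesis .
qed

lemma gauss_norm_linear_factor_le:
  assumes "0 < \<rho>"
  shows "gauss_norm ([:- g, 1:] * h) \<rho> \<le> max \<rho> (v g) * gauss_norm h \<rho>"
proof (rule gauss_norm_le)
  fix k
  define G where "G = gauss_norm h \<rho>"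
  have G: "v (coeff h j) * \<rho> ^ j \<le> G" for j
    unfolding G_def using assms by (simp add: coeff_le_gauss_norm)
  have G_nonneg: "0 \<le> G"
    using G[of 0] by (simp add: order_trans[OF v_nonneg])
  show "v (coeff ([:- g, 1:] * h) k) * \<rho> ^ k \<le> max \<rho> (v g) * G"
  proof (cases k)
    case 0
    then show ?thesis
      using mult_mono[OF max.cobounded2 G[of 0]] assms by (simp add: mult.commute)
  next
    case (Suc j)
    have "v (coeff ([:- g, 1:] * h) k) \<le> max (v (coeff h j)) (v (g * coeff h k))"
      using Suc v_diff_le[of "coeff h j" "g * coeff h k"] by simp
    then have "v (coeff ([:- g, 1:] * h) k) * \<rho> ^ k
        \<le> max (v (coeff h j)) (v (g * coeff h k)) * \<rho> ^ k"
      using assms by (simp add: mult_right_mono)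
    also have "\<dots> = max (v (coeff h j) * \<rho> ^ k) (v (g * coeff h k) * \<rho> ^ k)"
      using assms by (simp add: max_mult_distrib_right)
    also have "\<dots> = max (\<rho> * (v (coeff h j) * \<rho> ^ j)) (v g * (v (coeff h k) * \<rho> ^ k))"
      using Suc by (simp add: mult_ac)
    also have "\<dots> \<le> max \<rho> (v g) * G"
      using mult_mono[OF max.cobounded1 G[of j]] mult_mono[OF max.cobounded2 G[of k]] assms G_nonneg
      by simp
    finally show ?thesis .
  qed
qed

lemma gauss_norm_attained_first:
  assumes "0 \<le> \<rho>"
  obtains k where "v (coeff h k) * \<rho> ^ k = gauss_norm h \<rho>"
    "\<And>j. j < k \<Longrightarrow> v (coeff h j) * \<rho> ^ j < gauss_norm h \<rho>"
proof -
  define k where "k = (LEAST k. v (coeff h k) * \<rho> ^ k = gauss_norm h \<rho>)"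
  have "v (coeff h k) * \<rho> ^ k = gauss_norm h \<rho>"
    unfolding k_def using gauss_norm_attained[of h \<rho>] by (metis (mono_tags) LeastI)
  moreover have "v (coeff h j) * \<rho> ^ j < gauss_norm h \<rho>" if "j < k" for j
    using not_less_Least[OF that[unfolded k_def]] coeff_le_gauss_norm[OF assms, of h j] by simp
  ultimately show ?thesis
    using that by blast
qed

lemma gauss_norm_attained_last:
  assumes "0 < \<rho>" "h \<noteq> 0"
  obtains k where "v (coeff h k) * \<rho> ^ k = gauss_norm h \<rho>"
    "\<And>j. k < j \<Longrightarrow> v (coeff h j) * \<rho> ^ j < gauss_norm h \<rho>"
proof -
  define T where "T = {k. k \<le> degree h \<and> v (coeff h k) * \<rho> ^ k = gauss_norm h \<rho>}"
  have "finite T" "T \<noteq> {}"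
    using gauss_norm_attained[of h \<rho>] unfolding T_def by auto
  then have "Max T \<in> T"
    by (rule Max_in)
  moreover have "v (coeff h j) * \<rho> ^ j < gauss_norm h \<rho>" if "Max T < j" for j
  proof (cases "j \<le> degree h")
    case True
    then have "j \<notin> T"
      using that Max_ge[OF \<open>finite T\<close>, of j] by auto
    then show ?thesis
      using True coeff_le_gauss_norm[of \<rho> h j] assms(1) unfolding T_def by fastforce
  next
    case False
    then show ?thesis
      using gauss_norm_pos[OF assms(2,1)] by (simp add: coeff_eq_0)
  qed
  ultimately show ?thesis
    using that unfolding T_def by blast
qed

text \<open>Multiplying by \<open>X - g\<close> shifts the last extremal index of \<open>h\<close> up by
  one when \<open>v g \<le> \<rho>\<close> and keeps the first one when \<open>\<rho> < v g\<close>;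
  no cancellation can occur there.\<close>

lemma gauss_norm_linear_factor_ge_if_le:
  assumes "0 < \<rho>" "h \<noteq> 0" "v g \<le> \<rho>"
  shows "\<rho> * gauss_norm h \<rho> \<le> gauss_norm ([:- g, 1:] * h) \<rho>"
proof -
  obtain k where k: "v (coeff h k) * \<rho> ^ k = gauss_norm h \<rho>"
    "v (coeff h (Suc k)) * \<rho> ^ Suc k < gauss_norm h \<rho>"
    using gauss_norm_attained_last[OF assms(1,2)] by (metis lessI)
  have "v (g * coeff h (Suc k)) * \<rho> ^ Suc k \<le> \<rho> * (v (coeff h (Suc k)) * \<rho> ^ Suc k)"
    using assms(1,3) by (simp add: mult_right_mono mult_ac)
  also have "\<dots> < v (coeff h k) * \<rho> ^ Suc k"
    using k assms(1) by (simp add: mult_ac)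
  finally have "v (coeff h k - g * coeff h (Suc k)) = v (coeff h k)"
    using assms(1) v_add_eq_left[of "- (g * coeff h (Suc k))" "coeff h k"] by simp
  then have "\<rho> * gauss_norm h \<rho> = v (coeff ([:- g, 1:] * h) (Suc k)) * \<rho> ^ Suc k"
    using k(1) by (simp add: mult_ac)
  then show ?thesis
    using coeff_le_gauss_norm[of \<rho> "[:- g, 1:] * h" "Suc k"] assms(1) by linarith
qed

lemma gauss_norm_linear_factor_ge_if_greater:
  assumes "0 < \<rho>" "h \<noteq> 0" "\<rho> < v g"
  shows "v g * gauss_norm h \<rho> \<le> gauss_norm ([:- g, 1:] * h) \<rho>"
proof -
  obtain k where k: "v (coeff h k) * \<rho> ^ k = gauss_norm h \<rho>"
    "\<And>j. j < k \<Longrightarrow> v (coeff h j) * \<rho> ^ j < gauss_norm h \<rho>"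
    using gauss_norm_attained_first[of \<rho> h] assms(1) by auto
  have "v (coeff ([:- g, 1:] * h) k) = v (g * coeff h k)"
  proof (cases k)
    case (Suc j)
    have "v (coeff h j) * \<rho> ^ k < \<rho> * gauss_norm h \<rho>"
      using k(2)[of j] Suc assms(1) by (simp add: mult_ac)
    also have "\<dots> < v g * gauss_norm h \<rho>"
      using assms(3) gauss_norm_pos[OF assms(2,1)] by simp
    also have "\<dots> = v (g * coeff h k) * \<rho> ^ k"
      by (simp flip: k(1) add: mult.assoc)
    finally have "v (coeff h j) < v (g * coeff h k)"
      using assms(1) by simp
    then show ?thesis
      using Suc v_add_eq_right[of "coeff h j" "- (g * coeff h k)"] by simp
  qed simp
  then have "v g * gauss_norm h \<rho> = v (coeff ([:- g, 1:] * h) k) * \<rho> ^ k"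
    using k(1) by (simp add: mult_ac)
  then show ?thesis
    using coeff_le_gauss_norm[of \<rho> "[:- g, 1:] * h" k] assms(1) by linarith
qed

lemma gauss_norm_linear_factor:
  assumes "0 < \<rho>"
  shows "gauss_norm ([:- g, 1:] * h) \<rho> = max \<rho> (v g) * gauss_norm h \<rho>"
proof (cases "h = 0")
  case False
  then have "max \<rho> (v g) * gauss_norm h \<rho> \<le> gauss_norm ([:- g, 1:] * h) \<rho>"
    using gauss_norm_linear_factor_ge_if_le[OF assms] gauss_norm_linear_factor_ge_if_greater[OF assms]
    by (cases "v g \<le> \<rho>") (simp_all add: max_def)
  then show ?thesis
    using gauss_norm_linear_factor_le[OF assms] by (rule antisym[rotated])
qed simp

end

locale prime_power_binomials = nonarch_field v for v :: "'L::field \<Rightarrow> real" +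
  fixes p N :: nat and t :: real
  assumes prime: "prime p"
    and t_ge_1: "1 \<le> t"
    and v_p_t_power_less_1: "v (of_nat p) * t ^ N < 1"
begin

lemma v_p_t_power_nonneg: "0 \<le> v (of_nat p) * t ^ N"
  using t_ge_1 by simp

lemma binomial_term_le:
  assumes "0 < k" "k < p ^ i" "p ^ i \<le> N" "v a \<le> \<rho> * t" "0 \<le> \<rho>"
  shows "v (of_nat (p ^ i choose k) * a ^ (p ^ i - k))
    \<le> v (of_nat p) * t ^ N * \<rho> ^ (p ^ i - k)"
proof -
  let ?D = "p ^ i - k"
  have "v (of_nat (p ^ i choose k)) \<le> v (of_nat p)"
    using v_of_nat_le_of_dvd prime_dvd_choose_prime_power[OF prime assms(1,2)] .
  moreover have "v a ^ ?D \<le> t ^ N * \<rho> ^ ?D"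
  proof -
    have "v a ^ ?D \<le> (\<rho> * t) ^ ?D"
      using assms(4) by (intro power_mono) simp_all
    also have "\<dots> = t ^ ?D * \<rho> ^ ?D"
      by (simp add: power_mult_distrib mult.commute)
    also have "\<dots> \<le> t ^ N * \<rho> ^ ?D"
      using assms(3,5) t_ge_1 by (intro mult_right_mono power_increasing) auto
    finally show ?thesis .
  qed
  ultimately show ?thesis
    using mult_mono[of _ "v (of_nat p)" "v a ^ ?D" "t ^ N * \<rho> ^ ?D"] by (simp add: mult.assoc)
qed

lemma v_power_diff_le:
  assumes "p ^ i \<le> N" "v a \<le> v (z - a) * t"
  shows "v (z ^ p ^ i - a ^ p ^ i) \<le> v (z - a) ^ p ^ i"
proof -
  define n where "n = p ^ i"
  define \<rho> where "\<rho> = v (z - a)"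
  define T where "T k = of_nat (n choose k) * (z - a) ^ k * a ^ (n - k)" for k
  have "z ^ n = (\<Sum>k\<le>n. T k)"
    unfolding T_def using binomial_ring[of "z - a" a n] by simp
  also have "\<dots> = a ^ n + (\<Sum>k\<in>{..n} - {0}. T k)"
    by (subst sum.remove[of _ 0]) (simp_all add: T_def)
  finally have diff: "z ^ n - a ^ n = (\<Sum>k\<in>{..n} - {0}. T k)"
    by simp
  have "v (T k) \<le> \<rho> ^ n" if k: "k \<in> {..n} - {0}" for k
  proof (cases "k = n")
    case False
    then have "v (T k) = \<rho> ^ k * v (of_nat (n choose k) * a ^ (n - k))"
      by (simp add: T_def \<rho>_def)
    also have "\<dots> \<le> \<rho> ^ k * (v (of_nat p) * t ^ N * \<rho> ^ (n - k))"
      using k False assms unfolding n_def \<rho>_def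
      by (intro mult_left_mono binomial_term_le) auto
    also have "\<dots> = v (of_nat p) * t ^ N * \<rho> ^ n"
      using k by (simp add: power_add[symmetric] mult_ac)
    also have "\<dots> \<le> \<rho> ^ n"
      using mult_left_le_one_le[OF _ v_p_t_power_nonneg less_imp_le[OF v_p_t_power_less_1]]
      by (simp add: \<rho>_def)
    finally show ?thesis .
  qed (simp add: T_def \<rho>_def)
  then have "v (z ^ n - a ^ n) \<le> \<rho> ^ n"
    unfolding diff by (intro v_sum_le) (simp_all add: \<rho>_def)
  then show ?thesis
    by (simp add: n_def \<rho>_def)
qed

text \<open>The coefficient of \<open>X^(p^i\<^sub>0)\<close> in \<open>\<Sum>\<^sub>i c i (X + a)^(p^i)\<close> is
  \<open>c i\<^sub>0\<close> plus contributions of the higher powers, which carry binomial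
  coefficients divisible by \<open>p\<close>; at a dominant index \<open>i\<^sub>0\<close> they are too
  small to cancel \<open>c i\<^sub>0\<close>.\<close>

lemma v_cross_term_le:
  assumes "p ^ i \<le> N" "i \<noteq> i\<^sub>0" "v c * \<rho> ^ p ^ i \<le> v c\<^sub>0 * \<rho> ^ p ^ i\<^sub>0"
    and "v a \<le> \<rho> * t" "0 < \<rho>"
  shows "v (c * (of_nat (p ^ i choose p ^ i\<^sub>0) * a ^ (p ^ i - p ^ i\<^sub>0)))
    \<le> v (of_nat p) * t ^ N * v c\<^sub>0"
proof (cases "p ^ i < p ^ i\<^sub>0")
  case True
  then show ?thesis
    using v_p_t_power_nonneg by (simp add: binomial_eq_0)
next
  case False
  define n where "n = p ^ i\<^sub>0"
  have n_less: "n < p ^ i"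
    using False assms(2) prime_gt_1_nat[OF prime] unfolding n_def by (simp add: le_less)
  have "v c * \<rho> ^ (p ^ i - n) * \<rho> ^ n \<le> v c\<^sub>0 * \<rho> ^ n"
    using assms(3) n_less by (simp add: n_def mult.assoc power_add[symmetric])
  then have dominated: "v c * \<rho> ^ (p ^ i - n) \<le> v c\<^sub>0"
    using assms(5) by simp
  have "0 < n"
    using prime_gt_0_nat[OF prime] by (simp add: n_def)
  then have "v (of_nat (p ^ i choose n) * a ^ (p ^ i - n))
      \<le> v (of_nat p) * t ^ N * \<rho> ^ (p ^ i - n)"
    using binomial_term_le[of n i a \<rho>] n_less assms(1,4,5) by simp
  then have "v (c * (of_nat (p ^ i choose n) * a ^ (p ^ i - n)))
      \<le> v c * (v (of_nat p) * t ^ N * \<rho> ^ (p ^ i - n))"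
    by (subst v_mult) (rule mult_left_mono[OF _ v_nonneg])
  also have "\<dots> \<le> v (of_nat p) * t ^ N * v c\<^sub>0"
    using mult_left_mono[OF dominated v_p_t_power_nonneg] by (simp add: mult_ac)
  finally show ?thesis
    by (simp add: n_def)
qed

lemma v_coeff_pcompose_sum_monom_dominant:
  assumes "finite I" "\<And>i. i \<in> I \<Longrightarrow> p ^ i \<le> N" "i\<^sub>0 \<in> I"
    and "\<And>i. i \<in> I \<Longrightarrow> v (c i) * \<rho> ^ p ^ i \<le> v (c i\<^sub>0) * \<rho> ^ p ^ i\<^sub>0"
    and "v a \<le> \<rho> * t" "0 < \<rho>"
  shows "v (coeff (pcompose (\<Sum>i\<in>I. monom (c i) (p ^ i)) [:a, 1:]) (p ^ i\<^sub>0)) = v (c i\<^sub>0)"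
proof -
  define T where "T i = c i * (of_nat (p ^ i choose p ^ i\<^sub>0) * a ^ (p ^ i - p ^ i\<^sub>0))" for i
  have "coeff (pcompose (\<Sum>i\<in>I. monom (c i) (p ^ i)) [:a, 1:]) (p ^ i\<^sub>0) = (\<Sum>i\<in>I. T i)"
    by (simp add: coeff_pcompose_sum_monom_linear T_def)
  also have "\<dots> = c i\<^sub>0 + (\<Sum>i\<in>I - {i\<^sub>0}. T i)"
    using sum.remove[OF assms(1,3), of T] by (simp add: T_def)
  finally have coeff: "coeff (pcompose (\<Sum>i\<in>I. monom (c i) (p ^ i)) [:a, 1:]) (p ^ i\<^sub>0)
      = c i\<^sub>0 + (\<Sum>i\<in>I - {i\<^sub>0}. T i)" .
  have "v (\<Sum>i\<in>I - {i\<^sub>0}. T i) \<le> v (of_nat p) * t ^ N * v (c i\<^sub>0)"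
    using assms v_p_t_power_nonneg unfolding T_def by (intro v_sum_le v_cross_term_le) auto
  then show ?thesis
    unfolding coeff using v_p_t_power_less_1 by (rule v_add_eq_if_le_contraction)
qed

lemma gauss_norm_pcompose_sum_monom_ge:
  assumes "finite I" "\<And>i. i \<in> I \<Longrightarrow> p ^ i \<le> N" "j \<in> I" "v a \<le> \<rho> * t" "0 < \<rho>"
  shows "v (c j) * \<rho> ^ p ^ j
    \<le> gauss_norm (pcompose ((\<Sum>i\<in>I. monom (c i) (p ^ i)) - [:b:]) [:a, 1:]) \<rho>"
proof -
  define f where "f i = v (c i) * \<rho> ^ p ^ i" for i
  have "Max (f ` I) \<in> f ` I"
    using assms(1,3) by (intro Max_in) auto
  then obtain i\<^sub>0 where i\<^sub>0: "i\<^sub>0 \<in> I" "f i\<^sub>0 = Max (f ` I)"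
    by auto
  have max: "v (c i) * \<rho> ^ p ^ i \<le> v (c i\<^sub>0) * \<rho> ^ p ^ i\<^sub>0" if "i \<in> I" for i
    using i\<^sub>0 assms(1) that by (simp add: f_def)
  define Q where "Q = pcompose ((\<Sum>i\<in>I. monom (c i) (p ^ i)) - [:b:]) [:a, 1:]"
  have "coeff Q (p ^ i\<^sub>0) = coeff (pcompose (\<Sum>i\<in>I. monom (c i) (p ^ i)) [:a, 1:]) (p ^ i\<^sub>0)"
    unfolding Q_def using prime_gt_0_nat[OF prime]
    by (simp add: pcompose_diff coeff_pCons split: nat.split)
  also have "v \<dots> = v (c i\<^sub>0)"
    by (rule v_coeff_pcompose_sum_monom_dominant[OF assms(1,2) i\<^sub>0(1) max assms(4,5)])
  finally have "v (c i\<^sub>0) * \<rho> ^ p ^ i\<^sub>0 = v (coeff Q (p ^ i\<^sub>0)) * \<rho> ^ p ^ i\<^sub>0"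
    by simp
  also have "\<dots> \<le> gauss_norm Q \<rho>"
    using assms(5) by (simp add: coeff_le_gauss_norm)
  finally show ?thesis
    using max[OF assms(3)] unfolding Q_def by linarith
qed

end

locale valued_subfield = nonarch_field v for v :: "'L::field \<Rightarrow> real" +
  fixes K :: "'L set"
  assumes subfield: "is_subfield K"
begin

lemma K_0 [simp]: "0 \<in> K"
  and K_1 [simp]: "1 \<in> K"
  and K_add [simp]: "x \<in> K \<Longrightarrow> y \<in> K \<Longrightarrow> x + y \<in> K"
  and K_mult [simp]: "x \<in> K \<Longrightarrow> y \<in> K \<Longrightarrow> x * y \<in> K"
  and K_uminus [simp]: "x \<in> K \<Longrightarrow> - x \<in> K"
  using subfield unfolding is_subfield_def by blast+

lemma K_diff [simp]: "x \<in> K \<Longrightarrow> y \<in> K \<Longrightarrow> x - y \<in> K"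
  using K_add[of x "- y"] by simp

lemma K_power [simp]: "x \<in> K \<Longrightarrow> x ^ n \<in> K"
  by (induction n) simp_all

lemma K_sum [simp]: "(\<And>i. i \<in> A \<Longrightarrow> f i \<in> K) \<Longrightarrow> sum f A \<in> K"
  by (induction A rule: infinite_finite_induct) auto

lemma poly_mem_K: "(\<And>i. coeff q i \<in> K) \<Longrightarrow> x \<in> K \<Longrightarrow> poly q x \<in> K"
proof (induction q)
  case (pCons a q)
  then show ?case
    using pCons.prems(1)[of 0] pCons.prems(1)[of "Suc _"] by simp
qed simp

lemma coeff_synthetic_div_mem_K:
  "(\<And>i. coeff q i \<in> K) \<Longrightarrow> x \<in> K \<Longrightarrow> coeff (synthetic_div q x) i \<in> K"
proof (induction q arbitrary: i)
  case (pCons a q)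
  have "coeff q i \<in> K" for i
    using pCons.prems(1)[of "Suc i"] by simp
  then show ?case
    using pCons.IH poly_mem_K pCons.prems(2) by (cases i) simp_all
qed simp

lemma qnorm_le: "a \<in> K \<Longrightarrow> qnorm K v z \<le> v (z - a)"
  unfolding qnorm_def by (rule cInf_lower) (auto intro: bdd_belowI[of _ 0])

lemma qnorm_greatest: "(\<And>a. a \<in> K \<Longrightarrow> c \<le> v (z - a)) \<Longrightarrow> c \<le> qnorm K v z"
  unfolding qnorm_def by (rule cInf_greatest) (use K_0 in blast, auto)

lemma qnorm_nonneg: "0 \<le> qnorm K v z"
  by (rule qnorm_greatest) simp

lemma qnorm_lessD: "qnorm K v z < e \<Longrightarrow> \<exists>a\<in>K. v (z - a) < e"
  unfolding qnorm_def using cInf_lessD[of "(\<lambda>a. v (z - a)) ` K" e] K_0 by blast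

lemma qnorm_diff_K: "a \<in> K \<Longrightarrow> qnorm K v (z - a) = qnorm K v z"
  using qnorm_le[of "a + _" z] qnorm_le[of "_ - a" "z - a"]
  by (intro antisym qnorm_greatest) (simp_all add: algebra_simps)

lemma exists_translate_v_less:
  assumes "z\<^sub>0 \<notin> K" "qnorm K v z\<^sub>0 < e"
  obtains z where "z \<notin> K" "qnorm K v z = qnorm K v z\<^sub>0" "v z < e"
proof -
  obtain a where a: "a \<in> K" "v (z\<^sub>0 - a) < e"
    using qnorm_lessD[OF assms(2)] by blast
  moreover have "z\<^sub>0 - a \<notin> K"
    using assms(1) a(1) K_add[of "z\<^sub>0 - a" a] by auto
  ultimately show ?thesis
    using that qnorm_diff_K by blast
qed

lemma qnorm_add_le: "qnorm K v (x + y) \<le> max (qnorm K v x) (qnorm K v y)"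
proof (rule field_le_epsilon)
  fix e :: real
  assume "0 < e"
  then obtain a b where "a \<in> K" "v (x - a) < qnorm K v x + e" "b \<in> K" "v (y - b) < qnorm K v y + e"
    using qnorm_lessD[of x] qnorm_lessD[of y] by (meson less_add_same_cancel1)
  moreover have "qnorm K v (x + y) \<le> max (v (x - a)) (v (y - b))" if "a \<in> K" "b \<in> K"
    using qnorm_le[of "a + b" "x + y"] v_add_le[of "x - a" "y - b"] that
    by (simp add: algebra_simps)
  ultimately show "qnorm K v (x + y) \<le> max (qnorm K v x) (qnorm K v y) + e"
    by fastforce
qed

lemma qnorm_sum_le_Max:
  "finite F \<Longrightarrow> F \<noteq> {} \<Longrightarrow> qnorm K v (sum f F) \<le> Max ((\<lambda>s. qnorm K v (f s)) ` F)"
proof (induction F rule: finite_ne_induct)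
  case (insert x F)
  then show ?case
    using qnorm_add_le[of "f x" "sum f F"] by auto
qed simp

text \<open>The distance is not attained because \<open>z - a\<close> has the same value as some
  \<open>c \<in> K\<close> and \<open>(z - a) / c\<close> the same residue as some \<open>e \<in> K\<close>,
  so \<open>a + c e\<close> is strictly closer to \<open>z\<close>.\<close>

lemma qnorm_less_if_immediate_ext:
  assumes "immediate_ext K v" "z \<notin> K" "a \<in> K"
  shows "qnorm K v z < v (z - a)"
proof (rule ccontr)
  assume "\<not> qnorm K v z < v (z - a)"
  then have dist: "v (z - a) = qnorm K v z"
    using qnorm_le[OF assms(3), of z] by linarith
  have "z - a \<noteq> 0"
    using assms(2,3) by auto
  then have "v (z - a) \<in> v ` (K - {0})"
    using assms(1) unfolding immediate_ext_def by blast
  then obtain c where "c \<in> K - {0}" "v c = v (z - a)"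
    by (metis imageE)
  then have c: "c \<in> K" "c \<noteq> 0" "v c = v (z - a)"
    by simp_all
  then have "v ((z - a) / c) \<le> 1"
    by simp
  then obtain e where e: "e \<in> K" "v ((z - a) / c - e) < 1"
    using assms(1) unfolding immediate_ext_def by blast
  have "z - (a + c * e) = c * ((z - a) / c - e)"
    using c(2) by (simp add: field_simps)
  then have "v (z - (a + c * e)) = v c * v ((z - a) / c - e)"
    by simp
  also have "\<dots> < v (z - a)"
    using c e(2) \<open>z - a \<noteq> 0\<close> by simp
  finally show False
    using qnorm_le[of "a + c * e" z] assms(3) c(1) e(1) dist by simp
qed

lemma qnorm_pos_if_complete:
  assumes "v_complete K v" "z \<notin> K"
  shows "0 < qnorm K v z"
proof (rule ccontr)
  assume "\<not> 0 < qnorm K v z"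
  then have zero: "qnorm K v z = 0"
    using qnorm_nonneg[of z] by simp
  have "\<exists>a\<in>K. v (z - a) < inverse (real (Suc n))" for n
    using qnorm_lessD[of z "inverse (real (Suc n))"] zero by simp
  then obtain f where f: "\<And>n. f n \<in> K" "\<And>n. v (z - f n) < inverse (real (Suc n))"
    by metis
  obtain a where a: "a \<in> K" "(\<lambda>n. v (f n - a)) \<longlonglongrightarrow> 0"
    using assms(1) f(1) v_Cauchy_if_approximates[OF f(2)] unfolding v_complete_def by blast
  have "v (z - a) \<le> inverse (real (Suc n)) + v (f n - a)" for n
  proof -
    have "v (z - a) \<le> max (v (z - f n)) (v (f n - a))"
      using v_add_le[of "z - f n" "f n - a"] by simp
    also have "\<dots> \<le> inverse (real (Suc n)) + v (f n - a)"
      using less_imp_le[OF f(2)[of n]] by (simp add: add_increasing add_increasing2)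
    finally show ?thesis .
  qed
  moreover have "(\<lambda>n. inverse (real (Suc n)) + v (f n - a)) \<longlonglongrightarrow> 0"
    by (intro tendsto_add_zero LIMSEQ_inverse_real_of_nat a(2))
  ultimately have "v (z - a) \<le> 0"
    by (intro LIMSEQ_le_const) auto
  then have "v (z - a) = 0"
    by (intro order.antisym v_nonneg)
  then show False
    using assms(2) a(1) by simp
qed

text \<open>Over the algebraically closed \<open>K\<close>, \<open>q\<close> is a product of factors
  \<open>X - \<beta>\<close> with \<open>\<beta> \<in> K\<close>; once \<open>a\<close> is closer to \<open>z\<close> than every
  root \<open>\<beta>\<close>, we have \<open>v (z - \<beta>) = max (v (z - a)) (v (\<beta> - a))\<close>,
  which is the Gauss norm of \<open>X - (\<beta> - a)\<close> at radius \<open>v (z - a)\<close>.\<close>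

lemma v_poly_eq_gauss_norm_pcompose:
  assumes alg: "alg_closed_sub K" and not_attained: "\<And>a. a \<in> K \<Longrightarrow> qnorm K v z < v (z - a)"
    and coeffs: "\<And>i. coeff q i \<in> K"
  shows "\<exists>\<delta> > qnorm K v z. \<forall>a\<in>K. v (z - a) < \<delta> \<longrightarrow>
    v (poly q z) = gauss_norm (pcompose q [:a, 1:]) (v (z - a))"
  using coeffs
proof (induction "degree q" arbitrary: q)
  case 0
  then obtain c where "q = [:c:]"
    by (metis degree_eq_zeroE)
  then show ?case
    by (intro exI[of _ "qnorm K v z + 1"]) simp
next
  case (Suc n)
  obtain \<beta> where \<beta>: "\<beta> \<in> K" "poly q \<beta> = 0"
    using alg Suc.hyps(2) Suc.prems unfolding alg_closed_sub_def by (metis zero_less_Suc)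
  define q' where "q' = synthetic_div q \<beta>"
  have q: "q = [:- \<beta>, 1:] * q'"
    using synthetic_div_correct'[of \<beta> q] \<beta>(2) unfolding q'_def by simp
  have "n = degree q'" "\<And>i. coeff q' i \<in> K"
    unfolding q'_def using Suc.hyps(2) Suc.prems \<beta>(1)
    by (simp_all add: degree_synthetic_div coeff_synthetic_div_mem_K)
  then obtain \<delta> where \<delta>: "qnorm K v z < \<delta>"
    "\<And>a. a \<in> K \<Longrightarrow> v (z - a) < \<delta> \<Longrightarrow>
       v (poly q' z) = gauss_norm (pcompose q' [:a, 1:]) (v (z - a))"
    using Suc.hyps(1) by blast
  show ?case
  proof (intro exI[of _ "min \<delta> (v (z - \<beta>))"] conjI ballI impI)
    show "qnorm K v z < min \<delta> (v (z - \<beta>))"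
      using \<delta>(1) not_attained[OF \<beta>(1)] by simp
    fix a
    assume a: "a \<in> K" "v (z - a) < min \<delta> (v (z - \<beta>))"
    have \<rho>: "0 < v (z - a)"
      using not_attained[OF a(1)] qnorm_nonneg[of z] by linarith
    have "v (a - z) < v (z - \<beta>)"
      using a(2) by (simp add: v_diff_commute[of a z])
    then have "v ((z - \<beta>) + (a - z)) = v (z - \<beta>)"
      by (rule v_add_eq_left)
    then have "v (\<beta> - a) = v (z - \<beta>)"
      by (simp add: v_diff_commute[of \<beta> a])
    moreover have "poly q z = (z - \<beta>) * poly q' z"
      by (simp add: q algebra_simps)
    ultimately have "v (poly q z) = max (v (z - a)) (v (\<beta> - a)) * v (poly q' z)"
      using a(2) by simp
    also have "\<dots> = max (v (z - a)) (v (\<beta> - a)) * gauss_norm (pcompose q' [:a, 1:]) (v (z - a))"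
      using \<delta>(2)[OF a(1)] a(2) by simp
    also have "\<dots> = gauss_norm ([:- (\<beta> - a), 1:] * pcompose q' [:a, 1:]) (v (z - a))"
      by (rule gauss_norm_linear_factor[OF \<rho>, symmetric])
    also have "[:- (\<beta> - a), 1:] * pcompose q' [:a, 1:] = pcompose q [:a, 1:]"
      unfolding q pcompose_mult by (simp add: pcompose_pCons)
    finally show "v (poly q z) = gauss_norm (pcompose q [:a, 1:]) (v (z - a))" .
  qed
qed

end

lemma orthogonal_mod_imageI:
  fixes x :: "'i \<Rightarrow> 'L::field"
  assumes inj: "inj_on x A"
    and notin: "\<And>i. i \<in> A \<Longrightarrow> x i \<notin> K"
    and diff_notin: "\<And>i j. i \<in> A \<Longrightarrow> j \<in> A \<Longrightarrow> i \<noteq> j \<Longrightarrow> x i - x j \<notin> K"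
    and qnorm_sum: "\<And>I c. finite I \<Longrightarrow> I \<subseteq> A \<Longrightarrow> I \<noteq> {} \<Longrightarrow> (\<forall>i\<in>I. c i \<in> K) \<Longrightarrow>
      qnorm K v (\<Sum>i\<in>I. c i * x i) = Max ((\<lambda>i. qnorm K v (c i * x i)) ` I)"
  shows "orthogonal_mod K v (x ` A)"
  unfolding orthogonal_mod_def
proof (intro conjI ballI allI impI)
  fix F and c :: "'L \<Rightarrow> 'L"
  assume F: "finite F \<and> F \<subseteq> x ` A \<and> F \<noteq> {} \<and> (\<forall>s\<in>F. c s \<in> K)"
  define I where "I = A \<inter> x -` F"
  have F_eq: "F = x ` I" and I: "I \<subseteq> A"
    using F unfolding I_def by auto
  have inj_I: "inj_on x I"
    using inj_on_subset[OF inj I] .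
  have "finite I" "I \<noteq> {}"
    using F inj_I unfolding F_eq by (auto simp: finite_image_iff)
  then show "qnorm K v (\<Sum>s\<in>F. c s * s) = Max ((\<lambda>s. qnorm K v (c s * s)) ` F)"
    using qnorm_sum[of I "c \<circ> x"] F I unfolding F_eq
    by (simp add: sum.reindex[OF inj_I] image_image)
qed (use notin diff_notin in auto)

locale orthogonal_powers =
  valued_subfield v K + prime_power_binomials v p "p ^ m" t
  for v :: "'L::field \<Rightarrow> real" and K p m t +
  fixes z :: 'L
  assumes alg_closed: "alg_closed_sub K"
    and qnorm_pos: "0 < qnorm K v z"
    and qnorm_not_attained: "a \<in> K \<Longrightarrow> qnorm K v z < v (z - a)"
    and v_less: "v z < qnorm K v z * t"
begin

lemma power_le_power_m: "i < m \<Longrightarrow> p ^ i \<le> p ^ m"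
  using prime_gt_0_nat[OF prime] by (simp add: power_increasing)

lemma qnorm_less_v: "qnorm K v z < v z"
  using qnorm_not_attained[of 0] by simp

lemma v_approximant_le:
  assumes "v (z - a) < v z" "a \<in> K"
  shows "v a \<le> v (z - a) * t"
proof -
  have "v a = v z"
    using v_eq_if_v_diff_less[OF assms(1)] .
  also have "\<dots> < qnorm K v z * t"
    by (rule v_less)
  also have "\<dots> \<le> v (z - a) * t"
    using qnorm_not_attained[OF assms(2)] t_ge_1 by (intro mult_right_mono) auto
  finally show ?thesis
    by simp
qed

lemma v_sum_powers_diff_ge:
  assumes "finite I" "I \<subseteq> {..<m}" "\<And>i. i \<in> I \<Longrightarrow> c i \<in> K" "j \<in> I" "b \<in> K"
  shows "v (c j) * qnorm K v z ^ p ^ j \<le> v ((\<Sum>i\<in>I. c i * z ^ p ^ i) - b)"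
proof -
  define q where "q = (\<Sum>i\<in>I. monom (c i) (p ^ i)) - [:b:]"
  have "coeff q k \<in> K" for k
    unfolding q_def coeff_diff coeff_sum using assms(3,5) by (cases k) auto
  then obtain \<delta> where \<delta>: "qnorm K v z < \<delta>"
    "\<And>a. a \<in> K \<Longrightarrow> v (z - a) < \<delta> \<Longrightarrow> v (poly q z) = gauss_norm (pcompose q [:a, 1:]) (v (z - a))"
    using v_poly_eq_gauss_norm_pcompose[OF alg_closed qnorm_not_attained] by blast
  obtain a where a: "a \<in> K" "v (z - a) < min \<delta> (v z)"
    using qnorm_lessD[of z "min \<delta> (v z)"] \<delta>(1) qnorm_less_v by auto
  define \<rho> where "\<rho> = v (z - a)"
  have \<rho>: "qnorm K v z < \<rho>"
    unfolding \<rho>_def using qnorm_not_attained[OF a(1)] .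
  have "v (c j) * qnorm K v z ^ p ^ j \<le> v (c j) * \<rho> ^ p ^ j"
    using \<rho> qnorm_nonneg[of z] by (intro mult_left_mono power_mono) auto
  also have "\<dots> \<le> gauss_norm (pcompose q [:a, 1:]) \<rho>"
    unfolding q_def using assms(1,2,4) v_approximant_le[of a] a \<rho> qnorm_nonneg[of z]
    by (intro gauss_norm_pcompose_sum_monom_ge) (auto simp: \<rho>_def power_le_power_m)
  also have "\<dots> = v (poly q z)"
    using \<delta>(2)[OF a(1)] a(2) by (simp add: \<rho>_def)
  also have "poly q z = (\<Sum>i\<in>I. c i * z ^ p ^ i) - b"
    by (simp add: q_def poly_sum poly_monom)
  finally show ?thesis .
qed

lemma qnorm_monom_power_le:
  assumes "i < m" "c \<in> K"
  shows "qnorm K v (c * z ^ p ^ i) \<le> v c * qnorm K v z ^ p ^ i"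
proof -
  have bound: "qnorm K v (c * z ^ p ^ i) \<le> v c * e ^ p ^ i" if e: "qnorm K v z < e" "e < v z" for e
  proof -
    obtain a where a: "a \<in> K" "v (z - a) < e"
      using qnorm_lessD[OF e(1)] by blast
    have "qnorm K v (c * z ^ p ^ i) \<le> v (c * z ^ p ^ i - c * a ^ p ^ i)"
      using a(1) assms(2) by (intro qnorm_le) simp
    also have "\<dots> = v c * v (z ^ p ^ i - a ^ p ^ i)"
      by (simp flip: right_diff_distrib)
    also have "\<dots> \<le> v c * v (z - a) ^ p ^ i"
      using a e v_approximant_le[of a] power_le_power_m[OF assms(1)]
      by (intro mult_left_mono v_power_diff_le) auto
    also have "\<dots> \<le> v c * e ^ p ^ i"
      using a(2) by (intro mult_left_mono power_mono) auto
    finally show ?thesis .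
  qed
  have "((\<lambda>e. v c * e ^ p ^ i) \<longlongrightarrow> v c * qnorm K v z ^ p ^ i) (at_right (qnorm K v z))"
    by (intro tendsto_intros)
  moreover have "\<forall>\<^sub>F e in at_right (qnorm K v z). qnorm K v (c * z ^ p ^ i) \<le> v c * e ^ p ^ i"
    using eventually_at_right_real[OF qnorm_less_v] by eventually_elim (use bound in auto)
  ultimately show ?thesis
    by (rule tendsto_lowerbound) simp
qed

lemma sum_powers_notin_K:
  assumes "finite I" "I \<subseteq> {..<m}" "\<And>i. i \<in> I \<Longrightarrow> c i \<in> K" "j \<in> I" "c j \<noteq> 0"
  shows "(\<Sum>i\<in>I. c i * z ^ p ^ i) \<notin> K"
proof
  assume "(\<Sum>i\<in>I. c i * z ^ p ^ i) \<in> K"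
  then have "v (c j) * qnorm K v z ^ p ^ j \<le> 0"
    using v_sum_powers_diff_ge[OF assms(1-4)] by fastforce
  moreover have "0 < v (c j) * qnorm K v z ^ p ^ j"
    using assms(5) qnorm_pos by simp
  ultimately show False
    by linarith
qed

lemma qnorm_sum_powers:
  assumes "finite I" "I \<noteq> {}" "I \<subseteq> {..<m}" "\<forall>i\<in>I. c i \<in> K"
  shows "qnorm K v (\<Sum>i\<in>I. c i * z ^ p ^ i) = Max ((\<lambda>i. qnorm K v (c i * z ^ p ^ i)) ` I)"
proof (rule antisym)
  show "qnorm K v (\<Sum>i\<in>I. c i * z ^ p ^ i) \<le> Max ((\<lambda>i. qnorm K v (c i * z ^ p ^ i)) ` I)"
    using assms(1,2) by (rule qnorm_sum_le_Max)
  show "Max ((\<lambda>i. qnorm K v (c i * z ^ p ^ i)) ` I) \<le> qnorm K v (\<Sum>i\<in>I. c i * z ^ p ^ i)"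
  proof (rule Max.boundedI)
    fix y
    assume "y \<in> (\<lambda>i. qnorm K v (c i * z ^ p ^ i)) ` I"
    then obtain j where j: "j \<in> I" "y = qnorm K v (c j * z ^ p ^ j)"
      by blast
    have "y \<le> v (c j) * qnorm K v z ^ p ^ j"
      unfolding j(2) using j(1) assms(3,4) by (intro qnorm_monom_power_le) auto
    also have "\<dots> \<le> qnorm K v (\<Sum>i\<in>I. c i * z ^ p ^ i)"
      using assms j(1) by (intro qnorm_greatest v_sum_powers_diff_ge) auto
    finally show "y \<le> qnorm K v (\<Sum>i\<in>I. c i * z ^ p ^ i)" .
  qed (use assms(1,2) in auto)
qed

theorem orthogonal_mod_powers:
  "inj_on (\<lambda>i. z ^ p ^ i) {..<m} \<and> orthogonal_mod K v ((\<lambda>i. z ^ p ^ i) ` {..<m})"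
proof
  have diff_notin: "z ^ p ^ i - z ^ p ^ j \<notin> K" if "i < m" "j < m" "i \<noteq> j" for i j
    using sum_powers_notin_K[of "{i, j}" "\<lambda>k. if k = i then 1 else - 1" i] that by simp
  show inj: "inj_on (\<lambda>i. z ^ p ^ i) {..<m}"
  proof (rule inj_onI, rule ccontr)
    fix i j
    assume "i \<in> {..<m}" "j \<in> {..<m}" "z ^ p ^ i = z ^ p ^ j" "i \<noteq> j"
    then show False
      using diff_notin[of i j] by simp
  qed
  show "orthogonal_mod K v ((\<lambda>i. z ^ p ^ i) ` {..<m})"
  proof (rule orthogonal_mod_imageI[OF inj])
    show "z ^ p ^ i \<notin> K" if "i \<in> {..<m}" for i
      using sum_powers_notin_K[of "{i}" "\<lambda>_. 1" i] that by simp
  qed (use diff_notin qnorm_sum_powers in auto)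
qed

end

theorem mainTheorem4:
  fixes K :: "'L::field set" and v :: "'L \<Rightarrow> real" and p :: nat and m :: nat
  assumes "nonarch_abs v"
    and "is_subfield K"
    and "v_complete K v"
    and "nontrivially_valued K v"
    and "\<not> spherically_complete K v"
    and "spherically_complete (UNIV :: 'L set) v"
    and "immediate_ext K v"
    and "alg_closed_sub K"
    and "\<forall>n::nat. n > 0 \<longrightarrow> (of_nat n :: 'L) \<noteq> 0"
    and "prime p" and "v (of_nat p) < 1"
  shows "\<exists>x :: nat \<Rightarrow> 'L. inj_on x {..<m} \<and> orthogonal_mod K v (x ` {..<m})"
proof -
  interpret valued_subfield v K
    using assms(1,2) by unfold_locales
  have "K \<noteq> UNIV"
    using assms(5,6) by auto
  then obtain z\<^sub>0 where "z\<^sub>0 \<notin> K"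
    by blast
  then have "0 < qnorm K v z\<^sub>0"
    using qnorm_pos_if_complete[OF assms(3)] by blast
  obtain t where t: "1 < t" "v (of_nat p) * t ^ p ^ m < 1"
    using exists_gt_1_power_mult_less_1[of "v (of_nat p)" "p ^ m"] assms(10,11)
    by (auto simp: prime_gt_0_nat)
  then obtain z where z: "z \<notin> K" "qnorm K v z = qnorm K v z\<^sub>0" "v z < qnorm K v z * t"
    using exists_translate_v_less[OF \<open>z\<^sub>0 \<notin> K\<close>, of "qnorm K v z\<^sub>0 * t"]
      \<open>0 < qnorm K v z\<^sub>0\<close> by auto
  interpret orthogonal_powers v K p m t z
    using assms(8,10) t z(3) qnorm_pos_if_complete[OF assms(3) z(1)]
      qnorm_less_if_immediate_ext[OF assms(7) z(1)]
    by unfold_locales auto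
  show ?thesis
    using orthogonal_mod_powers by blast
qed

end
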